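(* Let $\mathcal{NCP}$ be the noncrossing gap-insertion operad (defined in the context). For $n\geq 2$ let $p_n=\{[n-1]\}\in\mathcal{NCP}(n)$ be the one-block partition of $[n-1]$. Then the operad $\mathcal{NCP}$ is generated by the elements $p_n$, $n\geq 2$, subject to the relations $$p_m\diamond_m p_n=p_n\diamond_1 p_m\qquad\text{for all } m,n\geq 2.$$ That is, if $\mathcal{Q}$ denotes the quotient of the free non-symmetric set operad on generators $q_n$ of arity $n$ ($n\geq 2$) by the relations $q_m\circ_m q_n=q_n\circ_1 q_m$ ($m,n\geq 2$), then the operad morphism $\mathcal{Q}\to\mathcal{NCP}$ sending $q_n\mapsto p_n$ exists and is an isomorphism.
   Context: A partition of degree $n$ is a set partition of $[n]=\{1,\dots,n\}$ into nonempty blocks (for $n=0$ there is only the empty partition $\emptyset$); partitions of other finite linearly ordered sets are identified with partitions of $[n]$ via the unique order-preserving bijection. A partition is noncrossing if there are no $a<c<b<d$ with $a,b$ in one block and $c,d$ in a different block. The noncrossing gap-insertion operad $\mathcal{NCP}$ is the non-symmetric set operad with $\mathcal{NCP}(0)=\emptyset$ and, for $n\geq 1$, $\mathcal{NCP}(n)$ the set of noncrossing partitions of $[n-1]$ (so a partition of degree $n-1$ has arity $n$, its inputs being the $n$ gaps before, between and after its elements; $\mathcal{NCP}(1)=\{\emptyset\}$ and $\emptyset$ is the unit). The partial composition, for $P=\{\pi_1,\dots,\pi_k\}\in\mathcal{NCP}(m)$, $Q=\{\rho_1,\dots,\rho_l\}\in\mathcal{NCP}(n)$ and $i\in[m]$,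 is $$P\diamond_i Q=\{\chi(\pi_1),\dots,\chi(\pi_k),\rho_1+i-1,\dots,\rho_l+i-1\},$$ where $\chi(p)=p$ if $p<i$ and $\chi(p)=p+n-1$ otherwise (applied elementwise), and $X+c$ denotes the shift of a set $X$ by $c$. (That is, $Q$ is inserted into the $i$-th gap of $P$.) *)

theory Defs
  imports Main "HOL-Library.Disjoint_Sets"
begin

text \<open>An element of NCP(n), n \<ge> 1, is a noncrossing partition of {1..n-1},
  represented as a set of blocks (nat set set). NCP(0) is empty.\<close>

definition noncrossing :: "nat set set \<Rightarrow> bool" where
  "noncrossing P \<longleftrightarrow> (\<forall>B\<in>P. \<forall>C\<in>P. B \<noteq> C \<longrightarrow>
     \<not> (\<exists>a b c d. a < c \<and> c < b \<and> b < d \<and> a \<in> B \<and> b \<in> B \<and> c \<in> C \<and> d \<in> C))"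

definition NCP :: "nat \<Rightarrow> nat set set set" where
  "NCP n = (if n = 0 then {} else {P. partition_on {1..n-1} P \<and> noncrossing P})"

text \<open>Partial composition P \<diamond>_i Q, where n is the arity of Q.\<close>
definition ncp_comp :: "nat set set \<Rightarrow> nat \<Rightarrow> nat \<Rightarrow> nat set set \<Rightarrow> nat set set" where
  "ncp_comp P i n Q =
     (\<lambda>B. (\<lambda>p. if p < i then p else p + n - 1) ` B) ` P \<union> (\<lambda>B. (\<lambda>x. x + i - 1) ` B) ` Q"

definition pgen :: "nat \<Rightarrow> nat set set" where
  "pgen n = {{1..n-1}}"

text \<open>Planar trees: Leaf is the unit; Node n ts is the generator q_n with the
  n subtrees ts grafted onto its inputs.\<close>
datatype ftree = Leaf | Node nat "ftree list"

fun wf_tree :: "ftree \<Rightarrow> bool" where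
  "wf_tree Leaf = True"
| "wf_tree (Node n ts) = (2 \<le> n \<and> length ts = n \<and> (\<forall>t\<in>set ts. wf_tree t))"

fun ar :: "ftree \<Rightarrow> nat" where
  "ar Leaf = 1"
| "ar (Node n ts) = sum_list (map ar ts)"

text \<open>Partial composition t \<circ>_i s: graft s onto the i-th leaf (1-indexed) of t.\<close>
fun graft :: "ftree \<Rightarrow> nat \<Rightarrow> ftree \<Rightarrow> ftree"
and graft_list :: "ftree list \<Rightarrow> nat \<Rightarrow> ftree \<Rightarrow> ftree list" where
  "graft Leaf i s = (if i = 1 then s else Leaf)"
| "graft (Node n ts) i s = Node n (graft_list ts i s)"
| "graft_list [] i s = []"
| "graft_list (t # ts) i s =
     (if i \<le> ar t then graft t i s # ts else t # graft_list ts (i - ar t) s)"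

definition qgen :: "nat \<Rightarrow> ftree" where
  "qgen n = Node n (replicate n Leaf)"

text \<open>The operad congruence on the free operad generated by the relations
  q_m \<circ>_m q_n = q_n \<circ>_1 q_m (m, n \<ge> 2); Q is the quotient by it.\<close>
inductive qrel :: "ftree \<Rightarrow> ftree \<Rightarrow> bool" where
  gen: "2 \<le> m \<Longrightarrow> 2 \<le> n \<Longrightarrow> qrel (graft (qgen m) m (qgen n)) (graft (qgen n) 1 (qgen m))"
| refl: "wf_tree t \<Longrightarrow> qrel t t"
| sym: "qrel t t' \<Longrightarrow> qrel t' t"
| trans: "qrel t t' \<Longrightarrow> qrel t' t'' \<Longrightarrow> qrel t t''"
| comp: "qrel t t' \<Longrightarrow> qrel s s' \<Longrightarrow> 1 \<le> i \<Longrightarrow> i \<le> ar t \<Longrightarrow>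
           qrel (graft t i s) (graft t' i s')"

fun phi :: "ftree \<Rightarrow> nat set set"
and phi_fill :: "nat set set \<Rightarrow> nat \<Rightarrow> ftree list \<Rightarrow> nat set set" where
  "phi Leaf = {}"
| "phi (Node n ts) = phi_fill (pgen n) 1 ts"
| "phi_fill P i [] = P"
| "phi_fill P i (t # ts) = phi_fill (ncp_comp P i (ar t) (phi t)) (i + ar t) ts"

end

theory Submission
  imports Defs
begin

(* A tree is sent to the noncrossing partition with one block per node: the block of a node
   with subtrees t_1, ..., t_m consists of the m - 1 gaps separating the leaves of consecutive
   subtrees, i.e. of the partial sums ar t_1 + ... + ar t_j for j < m. This description shows
   that phi lands in NCP and, by induction on the tree, that it turns grafting into partial
   composition; both sides of each relation q_m o_m q_n = q_n o_1 q_m give the two-block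
   partition {[1, m-1], [m, m+n-2]}, so phi factors through the quotient.

   Surjectivity: a noncrossing partition other than the one-block one contains an interval
   [c, e) with c >= 2 that is a union of blocks, which exhibits it as P1 o_c P2 with P1, P2
   of smaller arity.

   Injectivity: grafting the relation's two sides with the same subtrees gives the rotation
   q_n(q_k(a_1, ..., a_k), b_2, ..., b_n) ~ q_k(a_1, ..., a_(k-1), q_n(a_k, b_2, ..., b_n)),
   and rotating repeatedly relates every tree to one in which the first child of every node is
   a leaf. Such a tree is recovered from its partition: the block containing 1 is the root
   block, its elements locate the subtrees, and the remaining blocks are their partitions. *)

lemma noncrossingI:
  assumes "\<And>B C a b c d. B \<in> P \<Longrightarrow> C \<in> P \<Longrightarrow> B \<noteq> C \<Longrightarrow> a < c \<Longrightarrow> c < b \<Longrightarrow> b < d \<Longrightarrow>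
    a \<in> B \<Longrightarrow> b \<in> B \<Longrightarrow> c \<in> C \<Longrightarrow> d \<in> C \<Longrightarrow> False"
  shows "noncrossing P"
  unfolding noncrossing_def using assms by meson

lemma noncrossingD:
  assumes "noncrossing P" "B \<in> P" "C \<in> P" "B \<noteq> C" "a < c" "c < b" "b < d"
    "a \<in> B" "b \<in> B" "c \<in> C" "d \<in> C"
  shows False
  using assms unfolding noncrossing_def by meson

lemma noncrossing_subset: "noncrossing P \<Longrightarrow> Q \<subseteq> P \<Longrightarrow> noncrossing Q"
  by (rule noncrossingI) (meson noncrossingD subsetD)

lemma noncrossing_image:
  assumes nc: "noncrossing P" and f: "strict_mono_on (\<Union>P) f"
  shows "noncrossing ((`) f ` P)"
proof (rule noncrossingI)
  fix X Y a b c d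
  assume "X \<in> (`) f ` P" "Y \<in> (`) f ` P" "X \<noteq> Y" "a < c" "c < b" "b < d"
    "a \<in> X" "b \<in> X" "c \<in> Y" "d \<in> Y"
  then obtain B C a' b' c' d' where "B \<in> P" "C \<in> P" "B \<noteq> C"
    "a' \<in> B" "b' \<in> B" "c' \<in> C" "d' \<in> C" "f a' < f c'" "f c' < f b'" "f b' < f d'"
    by blast
  with strict_mono_on_less[OF f] show False
    by (meson UnionI noncrossingD[OF nc])
qed

lemma noncrossing_Un:
  assumes "noncrossing P" "noncrossing Q" and below: "\<forall>x\<in>\<Union>P. \<forall>y\<in>\<Union>Q. x < y"
  shows "noncrossing (P \<union> Q)"
proof (rule noncrossingI)
  fix X Y a b c d
  assume XY: "X \<in> P \<union> Q" "Y \<in> P \<union> Q" "X \<noteq> Y"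
    and abcd: "a < c" "c < b" "b < d" "a \<in> X" "b \<in> X" "c \<in> Y" "d \<in> Y"
  show False
  proof (cases "X \<in> P"; cases "Y \<in> P")
    assume "X \<in> P" "Y \<in> P"
    then show False using noncrossingD[OF assms(1) _ _ XY(3) abcd] by blast
  next
    assume "X \<in> P" "Y \<notin> P"
    then have "b < c" using XY abcd(5,6) below by blast
    then show False using abcd by simp
  next
    assume "X \<notin> P" "Y \<in> P"
    then have "c < a" using XY abcd(4,6) below by blast
    then show False using abcd by simp
  next
    assume "X \<notin> P" "Y \<notin> P"
    then show False using XY noncrossingD[OF assms(2) _ _ XY(3) abcd] by blast
  qed
qed

definition straddles :: "nat set \<Rightarrow> nat \<Rightarrow> bool" where
  "straddles C r \<longleftrightarrow> (\<exists>x\<in>C. \<exists>y\<in>C. x < r \<and> r < y)"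

lemma noncrossing_insert:
  assumes "noncrossing P" "\<forall>C\<in>P. \<forall>r\<in>R. \<not> straddles C r"
  shows "noncrossing (insert R P)"
proof (rule noncrossingI)
  fix X Y a b c d
  assume XY: "X \<in> insert R P" "Y \<in> insert R P" "X \<noteq> Y"
    and abcd: "a < c" "c < b" "b < d" "a \<in> X" "b \<in> X" "c \<in> Y" "d \<in> Y"
  then consider "X = R" "Y \<in> P" | "Y = R" "X \<in> P" | "X \<in> P" "Y \<in> P" by blast
  then show False
  proof cases
    case 1
    then have "straddles Y b" using abcd unfolding straddles_def by blast
    then show False using 1 abcd(5) assms(2) by blast
  next
    case 2
    then have "straddles X c" using abcd unfolding straddles_def by blast
    then show False using 2 abcd(6) assms(2) by blast
  next
    case 3
    then show False using noncrossingD[OF assms(1) _ _ XY(3) abcd] by blast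
  qed
qed

lemma partition_on_Un:
  assumes "partition_on A P" "partition_on B Q" "A \<inter> B = {}"
  shows "partition_on (A \<union> B) (P \<union> Q)"
  using assms by (auto simp: partition_on_def intro!: disjoint_union)

lemma partition_on_image:
  assumes "partition_on A P" "inj_on f A"
  shows "partition_on (f ` A) ((`) f ` P)"
proof -
  have "(`) f ` P - {{}} = (`) f ` P"
    using partition_onD3[OF assms(1)] by auto
  then show ?thesis
    using partition_on_inj_image[OF assms] by simp
qed

lemma partition_on_split:
  assumes "partition_on A P" "\<forall>C\<in>P. C \<subseteq> G \<or> C \<inter> G = {}"
  shows "partition_on (A \<inter> G) {C \<in> P. C \<subseteq> G}" "partition_on (A - G) {C \<in> P. C \<inter> G = {}}"
  using assms by (auto simp: partition_on_def pairwise_def)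

lemma image_blocks_id:
  assumes "\<And>B x. B \<in> P \<Longrightarrow> x \<in> B \<Longrightarrow> f x = x"
  shows "(`) f ` P = P"
proof -
  have "f ` B = id ` B" if "B \<in> P" for B
    using that assms by (intro image_cong) auto
  then have "(`) f ` P = id ` P"
    by (intro image_cong) auto
  then show ?thesis by simp
qed

lemma NCP_iff:
  assumes "1 \<le> n"
  shows "P \<in> NCP n \<longleftrightarrow> partition_on {1..<n} P \<and> noncrossing P"
proof -
  have "{1..n - 1} = {1..<n}" by auto
  then show ?thesis using assms by (simp add: NCP_def)
qed

lemma NCP_arity_pos: "P \<in> NCP n \<Longrightarrow> 1 \<le> n"
  by (cases n) (auto simp: NCP_def)

lemma NCP_block_bounds: "P \<in> NCP n \<Longrightarrow> B \<in> P \<Longrightarrow> x \<in> B \<Longrightarrow> 1 \<le> x \<and> x < n"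
  using NCP_arity_pos NCP_iff partition_onD1 by (metis UnionI atLeastLessThan_iff)

lemma NCP_1: "{} \<in> NCP 1"
  by (simp add: NCP_iff partition_on_empty noncrossing_def)

definition shift_blocks :: "nat \<Rightarrow> nat set set \<Rightarrow> nat set set" where
  "shift_blocks c P = (`) (\<lambda>x. x + c) ` P"

lemma shift_blocks_0 [simp]: "shift_blocks 0 P = P"
  by (simp add: shift_blocks_def)

lemma shift_blocks_empty [simp]: "shift_blocks c {} = {}"
  by (simp add: shift_blocks_def)

lemma shift_blocks_singleton [simp]: "shift_blocks c {B} = {(\<lambda>x. x + c) ` B}"
  by (simp add: shift_blocks_def)

lemma shift_blocks_Un: "shift_blocks c (P \<union> Q) = shift_blocks c P \<union> shift_blocks c Q"
  by (simp add: shift_blocks_def image_Un)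

lemma shift_blocks_shift_blocks: "shift_blocks a (shift_blocks b P) = shift_blocks (a + b) P"
  by (simp add: shift_blocks_def image_image add_ac)

lemma shift_blocks_inject: "shift_blocks c P = shift_blocks c Q \<longleftrightarrow> P = Q"
proof -
  have "inj ((`) (\<lambda>x::nat. x + c))"
    by (simp add: inj_def inj_image_eq_iff)
  then show ?thesis by (auto simp: shift_blocks_def inj_image_eq_iff)
qed

lemma noncrossing_shift_blocks: "noncrossing P \<Longrightarrow> noncrossing (shift_blocks c P)"
  unfolding shift_blocks_def by (erule noncrossing_image) (simp add: strict_mono_onI)

lemma partition_on_shift_blocks:
  "partition_on A P \<Longrightarrow> partition_on ((\<lambda>x. x + c) ` A) (shift_blocks c P)"
  unfolding shift_blocks_def by (erule partition_on_image) (simp add: inj_on_def)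

definition comp_shift :: "nat \<Rightarrow> nat \<Rightarrow> nat \<Rightarrow> nat" where
  "comp_shift i n p = (if p < i then p else p + n - 1)"

lemma ncp_comp_eq:
  "1 \<le> i \<Longrightarrow> ncp_comp P i n Q = (`) (comp_shift i n) ` P \<union> shift_blocks (i - 1) Q"
  unfolding ncp_comp_def shift_blocks_def comp_shift_def
  by (simp add: add_diff_eq)

abbreviation ar_list :: "ftree list \<Rightarrow> nat" where
  "ar_list ts \<equiv> sum_list (map ar ts)"

lemma length_le_ar_list: "\<forall>t\<in>set ts. 1 \<le> ar t \<Longrightarrow> length ts \<le> ar_list ts"
  by (induction ts) auto

lemma ar_ge_1: "wf_tree t \<Longrightarrow> 1 \<le> ar t"
proof (induction t)
  case (Node m ts)
  then have "length ts \<le> ar_list ts" by (intro length_le_ar_list) auto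
  then show ?case using Node.prems by simp
qed simp

lemma ar_Node_ge_2: "wf_tree (Node m ts) \<Longrightarrow> 2 \<le> ar (Node m ts)"
  using length_le_ar_list[of ts] ar_ge_1 by fastforce

lemma ar_list_eq_0_iff: "\<forall>t\<in>set ts. wf_tree t \<Longrightarrow> ar_list ts = 0 \<longleftrightarrow> ts = []"
  using ar_ge_1 by (cases ts) fastforce+

lemma length_graft_list [simp]: "length (graft_list ts i s) = length ts"
  by (induction ts arbitrary: i) auto

lemma wf_graft:
  "wf_tree t \<Longrightarrow> wf_tree s \<Longrightarrow> wf_tree (graft t i s)"
  "\<forall>t\<in>set ts. wf_tree t \<Longrightarrow> wf_tree s \<Longrightarrow> \<forall>t\<in>set (graft_list ts i s). wf_tree t"
  by (induction t i s and ts i s rule: graft_graft_list.induct) auto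

lemma ar_graft:
  "1 \<le> i \<Longrightarrow> i \<le> ar t \<Longrightarrow> ar (graft t i s) = ar t + ar s - 1"
  "1 \<le> i \<Longrightarrow> i \<le> ar_list ts \<Longrightarrow> ar_list (graft_list ts i s) = ar_list ts + ar s - 1"
  by (induction t i s and ts i s rule: graft_graft_list.induct) auto

lemma ar_qgen [simp]: "ar (qgen n) = n"
  by (simp add: qgen_def map_replicate_const sum_list_replicate)

lemma wf_qgen: "2 \<le> n \<Longrightarrow> wf_tree (qgen n)"
  by (simp add: qgen_def)

lemma qrel_wf_ar: "qrel t t' \<Longrightarrow> wf_tree t \<and> wf_tree t' \<and> ar t = ar t'"
proof (induction rule: qrel.induct)
  case (gen m n)
  then show ?case by (simp add: ar_graft wf_graft wf_qgen)
next
  case (comp t t' s s' i)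
  then show ?case by (simp add: ar_graft wf_graft)
qed simp_all

section \<open>The blocks of phi on a node\<close>

fun root_block :: "ftree list \<Rightarrow> nat set" where
  "root_block [] = {}"
| "root_block [t] = {}"
| "root_block (t # t' # ts) = insert (ar t) ((\<lambda>x. x + ar t) ` root_block (t' # ts))"

fun child_blocks :: "ftree list \<Rightarrow> nat set set" where
  "child_blocks [] = {}"
| "child_blocks (t # ts) = phi t \<union> shift_blocks (ar t) (child_blocks ts)"

(* The position to which phi_fill P i ts moves an element p of a block of P. *)
fun fill_shift :: "nat \<Rightarrow> ftree list \<Rightarrow> nat \<Rightarrow> nat" where
  "fill_shift i [] = id"
| "fill_shift i (t # ts) = fill_shift (i + ar t) ts \<circ> comp_shift i (ar t)"

lemma fill_shift_below: "p < i \<Longrightarrow> fill_shift i ts p = p"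
  by (induction ts arbitrary: i) (simp_all add: comp_shift_def)

lemma phi_fill_eq:
  assumes "\<forall>t\<in>set ts. \<forall>B\<in>phi t. \<forall>x\<in>B. x < ar t" "1 \<le> i"
  shows "phi_fill P i ts = (`) (fill_shift i ts) ` P \<union> shift_blocks (i - 1) (child_blocks ts)"
  using assms
proof (induction ts arbitrary: P i)
  case (Cons t ts)
  let ?g = "fill_shift (i + ar t) ts" and ?T = "shift_blocks (i - 1) (phi t)"
  have "?g ` B = B" if B: "B \<in> ?T" for B
  proof -
    obtain B' where B': "B' \<in> phi t" "B = (\<lambda>x. x + (i - 1)) ` B'"
      using B unfolding shift_blocks_def by blast
    have "\<forall>x\<in>B'. x < ar t" using Cons.prems(1) B'(1) by simp
    then have "\<forall>x\<in>B. x < i + ar t" using B'(2) by auto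
    then have "?g ` B = id ` B" by (intro image_cong) (simp_all add: fill_shift_below)
    then show ?thesis by simp
  qed
  then have "(`) ?g ` ?T = id ` ?T" by (intro image_cong) simp_all
  then have fixed: "(`) ?g ` ?T = ?T" by simp
  have "phi_fill P i (t # ts) = (`) ?g ` ncp_comp P i (ar t) (phi t)
      \<union> shift_blocks (i + ar t - 1) (child_blocks ts)"
    using Cons by simp
  also have "\<dots> = (`) ?g ` (`) (comp_shift i (ar t)) ` P \<union> ?T
      \<union> shift_blocks (i - 1) (shift_blocks (ar t) (child_blocks ts))"
    using Cons.prems(2) fixed by (simp add: ncp_comp_eq image_Un shift_blocks_shift_blocks)
  also have "\<dots> = (`) (fill_shift i (t # ts)) ` P \<union> shift_blocks (i - 1) (child_blocks (t # ts))"
    by (simp add: image_comp shift_blocks_Un Un_assoc)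
  finally show ?case .
qed simp

lemma comp_shift_gaps:
  assumes "1 \<le> i" "1 \<le> l"
  shows "comp_shift i a ` {i..<i + l} = insert (i + a - 1) {i + a..<i + a + l - 1}"
proof (intro set_eqI iffI)
  fix y assume "y \<in> comp_shift i a ` {i..<i + l}"
  then show "y \<in> insert (i + a - 1) {i + a..<i + a + l - 1}"
    using assms by (auto simp: comp_shift_def)
next
  fix y assume y: "y \<in> insert (i + a - 1) {i + a..<i + a + l - 1}"
  show "y \<in> comp_shift i a ` {i..<i + l}"
  proof (cases "y = i + a - 1")
    case True
    then show ?thesis using assms by (intro image_eqI[of _ _ i]) (auto simp: comp_shift_def)
  next
    case False
    then show ?thesis using y assms by (intro image_eqI[of _ _ "y + 1 - a"]) (auto simp: comp_shift_def)
  qed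
qed

lemma fill_shift_gaps:
  "1 \<le> i \<Longrightarrow> fill_shift i ts ` {i..<i + length ts - 1} = (\<lambda>x. x + (i - 1)) ` root_block ts"
proof (induction ts arbitrary: i rule: root_block.induct)
  case (3 t t' ts)
  let ?a = "ar t" and ?l = "length (t' # ts)"
  have "{i..<i + length (t # t' # ts) - 1} = {i..<i + ?l}" by simp
  then have "fill_shift i (t # t' # ts) ` {i..<i + length (t # t' # ts) - 1}
      = fill_shift (i + ?a) (t' # ts) ` comp_shift i ?a ` {i..<i + ?l}"
    by (simp only: fill_shift.simps(2) image_comp)
  also have "\<dots> = fill_shift (i + ?a) (t' # ts) ` insert (i + ?a - 1) {i + ?a..<i + ?a + ?l - 1}"
    using comp_shift_gaps[OF "3.prems", of ?l ?a] by simp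
  also have "\<dots> = insert (i + ?a - 1) (fill_shift (i + ?a) (t' # ts) ` {i + ?a..<i + ?a + ?l - 1})"
    using "3.prems" by (simp del: fill_shift.simps add: fill_shift_below)
  also have "\<dots> = insert (i + ?a - 1) ((\<lambda>x. x + (i + ?a - 1)) ` root_block (t' # ts))"
    using "3.IH"[of "i + ?a"] "3.prems" by (simp del: fill_shift.simps add: add_ac)
  also have "\<dots> = (\<lambda>x. x + (i - 1)) ` root_block (t # t' # ts)"
    using "3.prems" by (auto simp: image_image add_ac)
  finally show ?case .
qed simp_all

lemma phi_Node_eq_if_bounded:
  assumes "wf_tree (Node m ts)" "\<forall>t\<in>set ts. \<forall>B\<in>phi t. \<forall>x\<in>B. x < ar t"
  shows "phi (Node m ts) = insert (root_block ts) (child_blocks ts)"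
proof -
  have "{1..m - 1} = {1..<1 + length ts - 1}" using assms(1) by auto
  then have "fill_shift 1 ts ` {1..m - 1} = root_block ts"
    using fill_shift_gaps[of 1 ts] by simp
  then show ?thesis using phi_fill_eq[OF assms(2), of 1 "pgen m"] by (simp add: pgen_def)
qed

lemma root_block_subset: "\<forall>t\<in>set ts. 1 \<le> ar t \<Longrightarrow> root_block ts \<subseteq> {1..<ar_list ts}"
proof (induction ts rule: root_block.induct)
  case (3 t t' ts)
  then have "1 \<le> ar_list (t' # ts)" by simp
  then show ?case using 3 by auto
qed auto

lemma root_block_nonempty: "2 \<le> length ts \<Longrightarrow> root_block ts \<noteq> {}"
  by (induction ts rule: root_block.induct) auto

lemma child_blocks_bounds:
  "\<forall>t\<in>set ts. phi t \<in> NCP (ar t) \<Longrightarrow> C \<in> child_blocks ts \<Longrightarrow> x \<in> C \<Longrightarrow> 1 \<le> x \<and> x < ar_list ts"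
proof (induction ts arbitrary: C x)
  case (Cons t ts)
  show ?case
  proof (cases "C \<in> phi t")
    case True
    then show ?thesis using Cons.prems NCP_block_bounds by fastforce
  next
    case False
    then obtain C' y where "C' \<in> child_blocks ts" "y \<in> C'" "x = y + ar t"
      using Cons.prems(2,3) by (auto simp: shift_blocks_def)
    then show ?thesis using Cons.IH[of C' y] Cons.prems(1) by simp
  qed
qed simp

lemma noncrossing_child_blocks:
  "\<forall>t\<in>set ts. phi t \<in> NCP (ar t) \<Longrightarrow> noncrossing (child_blocks ts)"
proof (induction ts)
  case Nil
  then show ?case by (simp add: noncrossing_def)
next
  case (Cons t ts)
  have "\<forall>x\<in>\<Union>(phi t). \<forall>y\<in>\<Union>(shift_blocks (ar t) (child_blocks ts)). x < y"
    using Cons.prems NCP_block_bounds child_blocks_bounds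
    by (fastforce simp: shift_blocks_def)
  moreover have "noncrossing (phi t)"
    using Cons.prems NCP_iff NCP_arity_pos by auto
  ultimately show ?case
    using Cons noncrossing_Un noncrossing_shift_blocks by simp
qed

lemma partition_child_blocks:
  "\<forall>t\<in>set ts. phi t \<in> NCP (ar t) \<Longrightarrow>
    partition_on ({1..<ar_list ts} - root_block ts) (child_blocks ts)"
proof (induction ts rule: root_block.induct)
  case 1
  then show ?case by (simp add: partition_on_empty)
next
  case (2 t)
  then show ?case using NCP_arity_pos NCP_iff by auto
next
  case (3 t t' ts)
  let ?a = "ar t" and ?R = "root_block (t' # ts)" and ?L = "ar_list (t' # ts)"
  have a: "1 \<le> ?a" using "3.prems" NCP_arity_pos by auto
  have "?R \<subseteq> {1..<?L}"
    using "3.prems" NCP_arity_pos by (intro root_block_subset) auto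
  then have "{1..<ar_list (t # t' # ts)} - root_block (t # t' # ts)
      = {1..<?a} \<union> (\<lambda>x. x + ?a) ` ({1..<?L} - ?R)"
  proof (intro set_eqI)
    fix y
    show "y \<in> {1..<ar_list (t # t' # ts)} - root_block (t # t' # ts) \<longleftrightarrow>
        y \<in> {1..<?a} \<union> (\<lambda>x. x + ?a) ` ({1..<?L} - ?R)"
    proof (cases "y < ?a")
      case False
      then have "y \<in> (\<lambda>x. x + ?a) ` S \<longleftrightarrow> y - ?a \<in> S" for S
        by (auto simp: image_iff intro: bexI[of _ "y - ?a"])
      then show ?thesis using False by (auto simp: image_iff)
    qed (use \<open>?R \<subseteq> {1..<?L}\<close> in auto)
  qed
  moreover have "partition_on ({1..<?a} \<union> (\<lambda>x. x + ?a) ` ({1..<?L} - ?R)) (child_blocks (t # t' # ts))"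
    using 3 a NCP_iff by (simp, intro partition_on_Un partition_on_shift_blocks) auto
  ultimately show ?case by simp
qed

lemma child_blocks_not_straddles:
  "\<forall>t\<in>set ts. phi t \<in> NCP (ar t) \<Longrightarrow> C \<in> child_blocks ts \<Longrightarrow> r \<in> root_block ts \<Longrightarrow>
    \<not> straddles C r"
proof (induction ts arbitrary: C r rule: root_block.induct)
  case (3 t t' ts)
  show ?case
  proof (cases "C \<in> phi t")
    case True
    then have "\<forall>y\<in>C. y < ar t" using "3.prems"(1) NCP_block_bounds by auto
    moreover have "ar t \<le> r" using "3.prems"(3) by auto
    ultimately show ?thesis unfolding straddles_def by auto
  next
    case False
    then obtain C' where C': "C' \<in> child_blocks (t' # ts)" "C = (\<lambda>x. x + ar t) ` C'"
      using "3.prems"(2) by (auto simp: shift_blocks_def)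
    then have above: "\<forall>y\<in>C. ar t < y"
      using "3.prems"(1) child_blocks_bounds[of "t' # ts"] by fastforce
    from "3.prems"(3) consider "r = ar t" | r' where "r' \<in> root_block (t' # ts)" "r = r' + ar t"
      by auto
    then show ?thesis
    proof cases
      case 1
      then show ?thesis using above unfolding straddles_def by auto
    next
      case 2
      then have "\<not> straddles C' r'" using "3.IH" "3.prems"(1) C'(1) by simp
      then show ?thesis using 2 C'(2) unfolding straddles_def by auto
    qed
  qed
qed simp_all

lemma phi_NCP: "wf_tree t \<Longrightarrow> phi t \<in> NCP (ar t)"
proof (induction t)
  case Leaf
  then show ?case using NCP_1 by simp
next
  case (Node m ts)
  have children: "\<forall>t\<in>set ts. phi t \<in> NCP (ar t)" using Node by auto
  then have "\<forall>t\<in>set ts. \<forall>B\<in>phi t. \<forall>x\<in>B. x < ar t" using NCP_block_bounds by blast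
  then have phi_eq: "phi (Node m ts) = insert (root_block ts) (child_blocks ts)"
    using Node.prems by (rule phi_Node_eq_if_bounded[rotated])
  have "\<forall>t\<in>set ts. 1 \<le> ar t" using children NCP_arity_pos by blast
  then have "root_block ts \<subseteq> {1..<ar_list ts}" "root_block ts \<noteq> {}"
    using root_block_subset root_block_nonempty Node.prems by auto
  moreover have part: "partition_on ({1..<ar_list ts} - root_block ts) (child_blocks ts)"
    using children by (rule partition_child_blocks)
  moreover have "disjnt (root_block ts) (\<Union>(child_blocks ts))"
    using partition_onD1[OF part] by (auto simp: disjnt_def)
  ultimately have "partition_on {1..<ar_list ts} (phi (Node m ts))"
    unfolding phi_eq by (simp add: partition_on_insert)
  moreover have "noncrossing (phi (Node m ts))"
    unfolding phi_eq using children noncrossing_child_blocks child_blocks_not_straddles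
    by (intro noncrossing_insert) auto
  ultimately show ?case using ar_ge_1[OF Node.prems] by (simp add: NCP_iff)
qed

lemma phi_block_bounds: "wf_tree t \<Longrightarrow> B \<in> phi t \<Longrightarrow> x \<in> B \<Longrightarrow> 1 \<le> x \<and> x < ar t"
  using phi_NCP NCP_block_bounds by blast

lemma phi_Node: "wf_tree (Node m ts) \<Longrightarrow> phi (Node m ts) = insert (root_block ts) (child_blocks ts)"
  using phi_block_bounds by (intro phi_Node_eq_if_bounded) auto

lemma child_blocks_nonempty: "\<forall>t\<in>set ts. wf_tree t \<Longrightarrow> {} \<notin> child_blocks ts"
  using partition_child_blocks[of ts] phi_NCP partition_onD3 by blast

lemma phi_nonempty: "wf_tree t \<Longrightarrow> {} \<notin> phi t"
  using phi_NCP[of t] ar_ge_1[of t] NCP_iff partition_onD3 by blast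

lemma child_blocks_bounds_wf:
  "\<forall>t\<in>set ts. wf_tree t \<Longrightarrow> C \<in> child_blocks ts \<Longrightarrow> x \<in> C \<Longrightarrow> 1 \<le> x \<and> x < ar_list ts"
  using child_blocks_bounds phi_NCP by blast

section \<open>phi is an operad morphism\<close>

lemma comp_shift_add_above: "1 \<le> i \<Longrightarrow> i \<le> a \<Longrightarrow> comp_shift i n (x + a) = x + (a + n - 1)"
  by (simp add: comp_shift_def)

lemma comp_shift_add_below: "a < i \<Longrightarrow> comp_shift i n (x + a) = comp_shift (i - a) n x + a"
  unfolding comp_shift_def by simp arith

lemma root_block_Cons: "us \<noteq> [] \<Longrightarrow> root_block (t # us) = insert (ar t) ((\<lambda>x. x + ar t) ` root_block us)"
  by (cases us) auto

lemma root_block_graft: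
  "1 \<le> i \<Longrightarrow> i \<le> ar_list ts \<Longrightarrow> root_block (graft_list ts i s) = comp_shift i (ar s) ` root_block ts"
proof (induction ts arbitrary: i)
  case (Cons t us)
  show ?case
  proof (cases "us = []")
    case True
    then show ?thesis using Cons.prems by simp
  next
    case False
    show ?thesis
    proof (cases "i \<le> ar t")
      case True
      have "comp_shift i (ar s) (ar t) = ar t + ar s - 1"
        using True by (simp add: comp_shift_def)
      then show ?thesis
        using Cons.prems False True comp_shift_add_above[OF Cons.prems(1) True]
        by (simp add: root_block_Cons ar_graft image_image)
    next
      case below: False
      have "graft_list us (i - ar t) s \<noteq> []"
        using False by (metis length_0_conv length_graft_list)
      then have "root_block (graft_list (t # us) i s)
          = insert (ar t) ((\<lambda>x. x + ar t) ` comp_shift (i - ar t) (ar s) ` root_block us)"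
        using Cons below by (simp add: root_block_Cons)
      moreover have "comp_shift i (ar s) (ar t) = ar t"
        using below by (simp add: comp_shift_def)
      ultimately show ?thesis
        using below False by (simp add: root_block_Cons image_image comp_shift_add_below)
    qed
  qed
qed simp

lemma comp_shift_shift_blocks_above:
  "1 \<le> i \<Longrightarrow> i \<le> a \<Longrightarrow> (`) (comp_shift i n) ` shift_blocks a K = shift_blocks (a + n - 1) K"
  by (simp add: shift_blocks_def image_image comp_shift_add_above)

lemma comp_shift_shift_blocks_below:
  "a < i \<Longrightarrow> (`) (comp_shift i n) ` shift_blocks a K = shift_blocks a ((`) (comp_shift (i - a) n) ` K)"
  by (simp add: shift_blocks_def image_image comp_shift_add_below)

lemma child_blocks_graft:
  assumes "\<forall>t\<in>set ts. wf_tree t" "1 \<le> i" "i \<le> ar_list ts"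
    and "\<forall>t\<in>set ts. \<forall>j. 1 \<le> j \<and> j \<le> ar t \<longrightarrow>
      phi (graft t j s) = (`) (comp_shift j (ar s)) ` phi t \<union> shift_blocks (j - 1) (phi s)"
  shows "child_blocks (graft_list ts i s)
    = (`) (comp_shift i (ar s)) ` child_blocks ts \<union> shift_blocks (i - 1) (phi s)"
  using assms
proof (induction ts arbitrary: i)
  case (Cons t ts)
  let ?n = "ar s" and ?a = "ar t"
  show ?case
  proof (cases "i \<le> ?a")
    case True
    then show ?thesis
      using Cons.prems by (auto simp: ar_graft image_Un comp_shift_shift_blocks_above)
  next
    case False
    have "(`) (comp_shift i ?n) ` phi t = phi t"
      using False Cons.prems(1) phi_block_bounds by (intro image_blocks_id) (force simp: comp_shift_def)
    moreover have "shift_blocks ?a (shift_blocks (i - ?a - 1) (phi s)) = shift_blocks (i - 1) (phi s)"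
      using False by (simp add: shift_blocks_shift_blocks)
    ultimately show ?thesis
      using Cons False
      by (auto simp: image_Un shift_blocks_Un comp_shift_shift_blocks_below)
  qed
qed simp

lemma phi_graft_comp_shift:
  "wf_tree t \<Longrightarrow> wf_tree s \<Longrightarrow> 1 \<le> i \<Longrightarrow> i \<le> ar t \<Longrightarrow>
    phi (graft t i s) = (`) (comp_shift i (ar s)) ` phi t \<union> shift_blocks (i - 1) (phi s)"
proof (induction t arbitrary: i)
  case Leaf
  then show ?case by simp
next
  case (Node m ts)
  have "wf_tree (Node m (graft_list ts i s))"
    using Node.prems wf_graft(1)[of "Node m ts"] by simp
  then have "phi (graft (Node m ts) i s)
      = insert (root_block (graft_list ts i s)) (child_blocks (graft_list ts i s))"
    by (simp only: graft.simps phi_Node)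
  also have "\<dots> = insert (comp_shift i (ar s) ` root_block ts)
      ((`) (comp_shift i (ar s)) ` child_blocks ts \<union> shift_blocks (i - 1) (phi s))"
    using Node by (simp add: root_block_graft child_blocks_graft)
  also have "\<dots> = (`) (comp_shift i (ar s)) ` phi (Node m ts) \<union> shift_blocks (i - 1) (phi s)"
    using phi_Node[OF Node.prems(1)] by simp
  finally show ?case .
qed

lemma phi_graft:
  "wf_tree t \<Longrightarrow> wf_tree s \<Longrightarrow> 1 \<le> i \<Longrightarrow> i \<le> ar t \<Longrightarrow>
    phi (graft t i s) = ncp_comp (phi t) i (ar s) (phi s)"
  by (simp add: phi_graft_comp_shift ncp_comp_eq)

lemma pgen_eq: "pgen n = {{1..<n}}"
  by (auto simp: pgen_def)

lemma root_block_replicate_Leaf: "root_block (replicate n Leaf) = {1..<n}"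
proof (induction n)
  case (Suc n)
  show ?case
  proof (cases "n = 0")
    case False
    then have "root_block (replicate (Suc n) Leaf) = insert 1 (Suc ` {1..<n})"
      using Suc.IH root_block_Cons[of "replicate n Leaf" Leaf] by simp
    also have "\<dots> = {1..<Suc n}"
      using False by (auto simp: image_iff intro: bexI[of _ "x - 1" for x])
    finally show ?thesis .
  qed simp
qed simp

lemma child_blocks_replicate_Leaf: "child_blocks (replicate n Leaf) = {}"
  by (induction n) auto

lemma phi_qgen: "2 \<le> n \<Longrightarrow> phi (qgen n) = pgen n"
  using phi_Node[OF wf_qgen[unfolded qgen_def]]
  by (simp add: qgen_def root_block_replicate_Leaf child_blocks_replicate_Leaf pgen_eq)

lemma ncp_comp_pgen_last:
  assumes "2 \<le> m"
  shows "ncp_comp (pgen m) m n (pgen n) = {{1..<m}, {m..<m + n - 1}}"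
proof -
  have "comp_shift m n ` {1..<m} = id ` {1..<m}"
    by (rule image_cong) (auto simp: comp_shift_def)
  moreover have "(\<lambda>x. x + (m - 1)) ` {1..<n} = {m..<m + n - 1}"
    using assms image_add_atLeastLessThan'[of "m - 1" 1 n] by (simp add: ac_simps)
  ultimately show ?thesis
    using assms by (simp add: ncp_comp_eq pgen_eq insert_commute)
qed

lemma ncp_comp_pgen_first:
  assumes "2 \<le> m"
  shows "ncp_comp (pgen n) 1 m (pgen m) = {{1..<m}, {m..<m + n - 1}}"
proof -
  have "comp_shift 1 m ` {1..<n} = (\<lambda>x. x + (m - 1)) ` {1..<n}"
    using assms by (intro image_cong) (auto simp: comp_shift_def)
  also have "\<dots> = {m..<m + n - 1}"
    using assms image_add_atLeastLessThan'[of "m - 1" 1 n] by (simp add: ac_simps)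
  finally show ?thesis
    by (auto simp: ncp_comp_eq pgen_eq)
qed

lemma phi_qrel: "qrel t t' \<Longrightarrow> phi t = phi t'"
proof (induction rule: qrel.induct)
  case (gen m n)
  have "phi (graft (qgen m) m (qgen n)) = ncp_comp (pgen m) m n (pgen n)"
    using gen by (simp add: phi_graft wf_qgen phi_qgen)
  moreover have "phi (graft (qgen n) 1 (qgen m)) = ncp_comp (pgen n) 1 m (pgen m)"
    using gen by (simp add: phi_graft wf_qgen phi_qgen)
  ultimately show ?case
    using gen by (simp only: ncp_comp_pgen_last ncp_comp_pgen_first)
next
  case (comp t t' s s' i)
  then show ?case using qrel_wf_ar by (simp add: phi_graft)
qed simp_all

section \<open>Surjectivity\<close>

lemma NCP_image:
  assumes "partition_on A Q" "noncrossing Q" "strict_mono_on A f" "f ` A = {1..<m}" "1 \<le> m"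
  shows "(`) f ` Q \<in> NCP m"
proof -
  have "partition_on {1..<m} ((`) f ` Q)"
    using partition_on_image[OF assms(1) strict_mono_on_imp_inj_on[OF assms(3)]] assms(4) by simp
  moreover have "noncrossing ((`) f ` Q)"
    using assms(2,3) partition_onD1[OF assms(1)] by (intro noncrossing_image) simp_all
  ultimately show ?thesis using assms(5) by (simp add: NCP_iff)
qed

lemma ncp_comp_decompose:
  assumes part: "partition_on {1..<n} P" and nc: "noncrossing P"
    and ce: "1 \<le> c" "c < e" "e \<le> n"
    and blocks: "\<forall>C\<in>P. C \<subseteq> {c..<e} \<or> C \<inter> {c..<e} = {}"
  shows "\<exists>P1 P2. P1 \<in> NCP (n - (e - c)) \<and> P2 \<in> NCP (e - c + 1) \<and> P = ncp_comp P1 c (e - c + 1) P2"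
proof -
  let ?G = "{c..<e}" and ?g = "e - c"
  let ?out = "{C \<in> P. C \<inter> ?G = {}}" and ?inn = "{C \<in> P. C \<subseteq> ?G}"
  define f where "f p = (if p < c then p else p - ?g)" for p
  define h where "h x = x - (c - 1)" for x
  have "f ` ({1..<n} - ?G) = {1..<n - ?g}"
  proof (intro set_eqI iffI)
    fix y assume y: "y \<in> {1..<n - ?g}"
    show "y \<in> f ` ({1..<n} - ?G)"
    proof (cases "y < c")
      case True
      then show ?thesis using y by (intro image_eqI[of _ _ y]) (auto simp: f_def)
    next
      case False
      then show ?thesis using y ce by (intro image_eqI[of _ _ "y + ?g"]) (auto simp: f_def)
    qed
  qed (use ce in \<open>auto simp: f_def\<close>)
  moreover have "strict_mono_on ({1..<n} - ?G) f"
    using ce by (auto simp: f_def intro!: strict_mono_onI)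
  ultimately have P1: "(`) f ` ?out \<in> NCP (n - ?g)"
    using partition_on_split(2)[OF part blocks] noncrossing_subset[OF nc] ce
    by (intro NCP_image) auto
  have "h ` ?G = {1..<?g + 1}"
  proof (intro set_eqI iffI)
    fix y assume "y \<in> {1..<?g + 1}"
    then show "y \<in> h ` ?G"
      using ce by (intro image_eqI[of _ _ "y + (c - 1)"]) (auto simp: h_def)
  qed (use ce in \<open>auto simp: h_def\<close>)
  moreover have "strict_mono_on ?G h"
    using ce by (auto simp: h_def intro!: strict_mono_onI)
  moreover have "{1..<n} \<inter> ?G = ?G" using ce by auto
  ultimately have P2: "(`) h ` ?inn \<in> NCP (?g + 1)"
    using partition_on_split(1)[OF part blocks] noncrossing_subset[OF nc]
    by (intro NCP_image) auto
  have "(`) (comp_shift c (?g + 1)) ` (`) f ` ?out = ?out"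
    unfolding image_image image_comp
    using ce partition_onD1[OF part] by (intro image_blocks_id) (auto simp: comp_shift_def f_def)
  moreover have "shift_blocks (c - 1) ((`) h ` ?inn) = ?inn"
    unfolding shift_blocks_def image_image image_comp
    using ce by (intro image_blocks_id) (auto simp: h_def)
  moreover have "?out \<union> ?inn = P" using blocks by blast
  ultimately have "P = ncp_comp ((`) f ` ?out) c (?g + 1) ((`) h ` ?inn)"
    using ce by (simp add: ncp_comp_eq)
  then show ?thesis using P1 P2 by blast
qed

lemma partition_on_eq_singleton:
  assumes "partition_on A P" "B \<in> P" "A \<subseteq> B"
  shows "P = {B}"
proof -
  have "C = B" if C: "C \<in> P" for C
  proof -
    obtain x where "x \<in> C" using C partition_onD3[OF assms(1)] by fastforce
    moreover have "C \<subseteq> A" using C partition_onD1[OF assms(1)] by blast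
    ultimately show ?thesis
      using C assms disjointD[OF partition_onD2[OF assms(1)]] by blast
  qed
  then show ?thesis using assms(2) by blast
qed

lemma noncrossing_interval_of_blocks:
  assumes part: "partition_on {1..<n} P" and nc: "noncrossing P"
    and B: "B \<in> P" "1 \<in> B" "B \<noteq> {1..<n}"
  obtains c e where "2 \<le> c" "c < e" "e \<le> n" "\<forall>C\<in>P. C \<subseteq> {c..<e} \<or> C \<inter> {c..<e} = {}"
proof -
  have range: "C \<subseteq> {1..<n}" if "C \<in> P" for C
    using that partition_onD1[OF part] by blast
  then obtain y where y: "y \<in> {1..<n}" "y \<notin> B" using B by blast
  define c where "c = (LEAST y. y \<in> {1..<n} \<and> y \<notin> B)"
  have c: "c \<in> {1..<n}" "c \<notin> B"
    using LeastI[of "\<lambda>y. y \<in> {1..<n} \<and> y \<notin> B" y] y unfolding c_def by auto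
  have below_c: "z \<in> B" if "1 \<le> z" "z < c" for z
    using that c not_less_Least[of z "\<lambda>y. y \<in> {1..<n} \<and> y \<notin> B"] unfolding c_def by auto
  have "2 \<le> c" using c B(2) by (cases "c = 1") auto
  define e where "e = (LEAST z. c < z \<and> (z \<in> B \<or> z = n))"
  have e: "c < e" "e \<in> B \<or> e = n" "e \<le> n"
    using LeastI[of "\<lambda>z. c < z \<and> (z \<in> B \<or> z = n)" n] Least_le[of "\<lambda>z. c < z \<and> (z \<in> B \<or> z = n)" n] c
    unfolding e_def by auto
  have gap: "z \<notin> B" if "c \<le> z" "z < e" for z
    using that c not_less_Least[of z "\<lambda>z. c < z \<and> (z \<in> B \<or> z = n)"] unfolding e_def
    by (cases "z = c") auto
  have "C \<subseteq> {c..<e} \<or> C \<inter> {c..<e} = {}" if C: "C \<in> P" for C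
  proof (rule ccontr)
    assume "\<not> ?thesis"
    then obtain x y where x: "x \<in> C" "c \<le> x" "x < e" and y: "y \<in> C" "\<not> (c \<le> y \<and> y < e)"
      by (meson atLeastLessThan_iff disjoint_iff subsetI)
    have "C \<noteq> B" using x gap by blast
    then have disj: "C \<inter> B = {}"
      using partition_onD2[OF part] C B(1) by (auto simp: disjoint_def)
    have y_range: "1 \<le> y" "y < n" using y(1) range[OF C] by auto
    show False
    proof (cases "y < c")
      case True
      then show False using below_c y_range y(1) disj by blast
    next
      case False
      then have "e \<le> y" using y(2) by simp
      then have "e \<in> B" using y_range e by auto
      then have "e < y" using \<open>e \<le> y\<close> disj y(1) by (cases "e = y") auto
      moreover have "1 < x" using x \<open>2 \<le> c\<close> by simp
      ultimately show False
        using noncrossingD[OF nc B(1) C \<open>C \<noteq> B\<close>[symmetric]] x y(1) B(2) \<open>e \<in> B\<close> by blast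
    qed
  qed
  then show thesis using that \<open>2 \<le> c\<close> e by blast
qed

lemma phi_surj: "P \<in> NCP n \<Longrightarrow> \<exists>t. wf_tree t \<and> ar t = n \<and> phi t = P"
proof (induction n arbitrary: P rule: less_induct)
  case (less n)
  have "1 \<le> n" using less.prems by (rule NCP_arity_pos)
  then have part: "partition_on {1..<n} P" and nc: "noncrossing P"
    using less.prems NCP_iff by auto
  consider "n = 1" | "2 \<le> n" "P = {{1..<n}}" | "2 \<le> n" "P \<noteq> {{1..<n}}"
    using \<open>1 \<le> n\<close> by linarith
  then show ?case
  proof cases
    case 1
    then have "P = {}" using part by (simp add: partition_on_empty)
    then show ?thesis using 1 by (intro exI[of _ Leaf]) simp
  next
    case 2
    then show ?thesis using phi_qgen wf_qgen by (intro exI[of _ "qgen n"]) (simp add: pgen_eq)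
  next
    case 3
    have "1 \<in> \<Union>P" using partition_onD1[OF part] 3 by auto
    then obtain B where B: "B \<in> P" "1 \<in> B" by blast
    have "B \<noteq> {1..<n}" using partition_on_eq_singleton[OF part B(1)] 3 by auto
    then obtain c e where ce: "2 \<le> c" "c < e" "e \<le> n"
      and blocks: "\<forall>C\<in>P. C \<subseteq> {c..<e} \<or> C \<inter> {c..<e} = {}"
      using noncrossing_interval_of_blocks[OF part nc B] by blast
    have "1 \<le> c" using ce by simp
    then obtain P1 P2 where P12: "P1 \<in> NCP (n - (e - c))" "P2 \<in> NCP (e - c + 1)"
      "P = ncp_comp P1 c (e - c + 1) P2"
      using ncp_comp_decompose[OF part nc _ ce(2,3) blocks] by blast
    have smaller: "n - (e - c) < n" "e - c + 1 < n" using ce by auto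
    obtain t1 where t1: "wf_tree t1" "ar t1 = n - (e - c)" "phi t1 = P1"
      using less.IH[OF smaller(1) P12(1)] by blast
    obtain t2 where t2: "wf_tree t2" "ar t2 = e - c + 1" "phi t2 = P2"
      using less.IH[OF smaller(2) P12(2)] by blast
    have "c \<le> ar t1" using ce t1(2) by auto
    then show ?thesis
      using t1 t2 P12(3) ce \<open>1 \<le> c\<close>
      by (intro exI[of _ "graft t1 c t2"]) (simp add: wf_graft ar_graft phi_graft)
  qed
qed

section \<open>Rotation and normal forms\<close>

lemma graft_list_append:
  "1 \<le> i \<Longrightarrow> i \<le> ar c \<Longrightarrow> graft_list (xs @ c # ys) (ar_list xs + i) s = xs @ graft c i s # ys"
  by (induction xs) auto

lemma graft_list_append_Leaf: "graft_list (xs @ Leaf # ys) (Suc (ar_list xs)) s = xs @ s # ys"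
  using graft_list_append[of 1 Leaf xs ys s] by simp

lemma qrel_Node_child:
  assumes "qrel u u'" "wf_tree (Node m (xs @ u # ys))"
  shows "qrel (Node m (xs @ u # ys)) (Node m (xs @ u' # ys))"
proof -
  let ?T = "Node m (xs @ Leaf # ys)"
  have "qrel ?T ?T" using assms(2) by (auto intro: qrel.refl)
  then have "qrel (graft ?T (Suc (ar_list xs)) u) (graft ?T (Suc (ar_list xs)) u')"
    using assms(1) by (rule qrel.comp) simp_all
  then show ?thesis by (simp add: graft_list_append_Leaf)
qed

lemma qrel_Node_children:
  "\<forall>t\<in>set ts. qrel t (f t) \<Longrightarrow> wf_tree (Node m (xs @ ts)) \<Longrightarrow>
    qrel (Node m (xs @ ts)) (Node m (xs @ map f ts))"
proof (induction ts arbitrary: xs)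
  case Nil
  then show ?case by (simp add: qrel.refl)
next
  case (Cons t ts)
  have "\<forall>t\<in>set ts. qrel t (f t)" using Cons.prems(1) by simp
  moreover have "wf_tree (Node m ((xs @ [f t]) @ ts))"
    using Cons.prems qrel_wf_ar[of t "f t"] by auto
  ultimately have "qrel (Node m ((xs @ [f t]) @ ts)) (Node m ((xs @ [f t]) @ map f ts))"
    using Cons.IH by blast
  moreover have "qrel (Node m (xs @ t # ts)) (Node m (xs @ f t # ts))"
    using Cons.prems by (intro qrel_Node_child) auto
  ultimately show ?case by (auto intro: qrel.trans)
qed

fun plug :: "ftree \<Rightarrow> nat \<Rightarrow> ftree list \<Rightarrow> ftree" where
  "plug T i [] = T"
| "plug T i (s # ss) = plug (graft T i s) (i + ar s) ss"

lemma plug_append: "plug T i (ss @ ss') = plug (plug T i ss) (i + ar_list ss) ss'"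
  by (induction ss arbitrary: T i) (auto simp: add.assoc)

lemma qrel_plug:
  "qrel T T' \<Longrightarrow> \<forall>s\<in>set ss. wf_tree s \<Longrightarrow> 1 \<le> i \<Longrightarrow> i + length ss \<le> ar T + 1 \<Longrightarrow>
    qrel (plug T i ss) (plug T' i ss)"
proof (induction ss arbitrary: T T' i)
  case (Cons s ss)
  then have "qrel (graft T i s) (graft T' i s)"
    by (intro qrel.comp qrel.refl) auto
  moreover have "i + ar s + length ss \<le> ar (graft T i s) + 1"
    using Cons.prems ar_ge_1[of s] by (simp add: ar_graft)
  ultimately show ?case using Cons by simp
qed simp

lemma plug_Leaves:
  "plug (Node m (xs @ replicate (length ss) Leaf @ ys)) (Suc (ar_list xs)) ss = Node m (xs @ ss @ ys)"
proof (induction ss arbitrary: xs)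
  case (Cons s ss)
  have "graft (Node m (xs @ Leaf # replicate (length ss) Leaf @ ys)) (Suc (ar_list xs)) s
      = Node m ((xs @ [s]) @ replicate (length ss) Leaf @ ys)"
    by (simp only: graft.simps graft_list_append_Leaf) simp
  then show ?case using Cons.IH[of "xs @ [s]"] by simp
qed simp

lemma plug_child:
  "1 \<le> i \<Longrightarrow> i + length ss \<le> ar c + 1 \<Longrightarrow>
    plug (Node m (xs @ c # ys)) (ar_list xs + i) ss = Node m (xs @ plug c i ss # ys)"
proof (induction ss arbitrary: c i)
  case (Cons s ss)
  then have "i + ar s + length ss \<le> ar (graft c i s) + 1"
    by (simp add: ar_graft)
  then show ?case
    using Cons by (simp add: graft_list_append add.assoc)
qed simp

lemma qgen_graft_first:
  "2 \<le> n \<Longrightarrow> graft (qgen n) 1 s = Node n (s # replicate (n - 1) Leaf)"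
  using graft_list_append_Leaf[of "[]" "replicate (n - 1) Leaf" s]
  by (cases n) (simp_all add: qgen_def)

lemma qgen_graft_last:
  "2 \<le> k \<Longrightarrow> graft (qgen k) k s = Node k (replicate (k - 1) Leaf @ [s])"
  using graft_list_append_Leaf[of "replicate (k - 1) Leaf" "[]" s]
  by (cases k) (simp_all add: qgen_def replicate_append_same map_replicate_const sum_list_replicate)

lemma qrel_rotate:
  assumes k: "2 \<le> k" and n: "2 \<le> n" and len: "length as = k - 1" "length bs = n - 1"
    and wf: "\<forall>t\<in>set as. wf_tree t" "wf_tree b" "\<forall>t\<in>set bs. wf_tree t"
  shows "qrel (Node n (Node k (as @ [b]) # bs)) (Node k (as @ [Node n (b # bs)]))"
proof -
  let ?zs = "as @ b # bs"
  have "qrel (graft (qgen k) k (qgen n)) (graft (qgen n) 1 (qgen k))"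
    using k n by (rule qrel.gen)
  then have "qrel (plug (graft (qgen k) k (qgen n)) 1 ?zs) (plug (graft (qgen n) 1 (qgen k)) 1 ?zs)"
    using k n len wf by (intro qrel_plug) (auto simp: ar_graft)
  moreover have "plug (graft (qgen k) k (qgen n)) 1 ?zs = Node k (as @ [Node n (b # bs)])"
  proof -
    have "plug (graft (qgen k) k (qgen n)) 1 as = Node k (as @ [qgen n])"
      using plug_Leaves[of k "[]" as "[qgen n]"] k len by (simp add: qgen_graft_last)
    moreover have "plug (qgen n) 1 (b # bs) = Node n (b # bs)"
      using plug_Leaves[of n "[]" "b # bs" "[]"] n len by (simp add: qgen_def)
    ultimately show ?thesis
      using plug_child[of 1 "b # bs" "qgen n" k as "[]"] n len
      by (simp add: plug_append add.commute)
  qed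
  moreover have "plug (graft (qgen n) 1 (qgen k)) 1 ?zs = Node n (Node k (as @ [b]) # bs)"
  proof -
    have "plug (qgen k) 1 (as @ [b]) = Node k (as @ [b])"
      using plug_Leaves[of k "[]" "as @ [b]" "[]"] k len by (simp add: qgen_def)
    moreover have "graft (qgen n) 1 (qgen k) = Node n (qgen k # replicate (n - 1) Leaf)"
      using n by (rule qgen_graft_first)
    ultimately have "plug (graft (qgen n) 1 (qgen k)) 1 (as @ [b])
        = Node n ([Node k (as @ [b])] @ replicate (length bs) Leaf @ [])"
      using plug_child[of 1 "as @ [b]" "qgen k" n "[]" "replicate (n - 1) Leaf"] k n len
      by simp
    then show ?thesis
      using plug_Leaves[of n "[Node k (as @ [b])]" bs "[]"]
      by (simp add: plug_append[of _ _ "as @ [b]" bs, simplified] add.commute)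
  qed
  ultimately show ?thesis by (metis qrel.sym)
qed

fun normal_form :: "ftree \<Rightarrow> bool" where
  "normal_form Leaf = True"
| "normal_form (Node n ts) \<longleftrightarrow> ts \<noteq> [] \<and> hd ts = Leaf \<and> (\<forall>t\<in>set ts. normal_form t)"

lemma normalize_Node_first_child:
  assumes "normal_form u" "\<forall>t\<in>set rest. normal_form t" "wf_tree (Node m (u # rest))"
  shows "\<exists>v. normal_form v \<and> qrel (Node m (u # rest)) v"
  using assms
proof (induction u arbitrary: m rest)
  case Leaf
  then show ?case by (intro exI[of _ "Node m (Leaf # rest)"]) (auto intro: qrel.refl)
next
  case (Node k vs)
  obtain as b where vs: "vs = as @ [b]"
    using Node.prems(1) by (cases vs rule: rev_cases) auto
  have wf: "2 \<le> k" "length vs = k" "\<forall>t\<in>set vs. wf_tree t" "2 \<le> m" "length rest = m - 1"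
    "\<forall>t\<in>set rest. wf_tree t"
    using Node.prems(3) by auto
  have "as \<noteq> []" using wf vs by auto
  then have as: "hd as = Leaf" "\<forall>t\<in>set as. normal_form t"
    using Node.prems(1) vs by auto
  (* After the rotation the first child of the node m is b, a subtree of u. *)
  have "\<exists>w. normal_form w \<and> qrel (Node m (b # rest)) w"
    using Node.prems wf vs by (intro Node.IH) auto
  then obtain w where w: "normal_form w" "qrel (Node m (b # rest)) w"
    by blast
  have "qrel (Node m (Node k (as @ [b]) # rest)) (Node k (as @ [Node m (b # rest)]))"
    using wf vs by (intro qrel_rotate) auto
  moreover have "qrel (Node k (as @ [Node m (b # rest)])) (Node k (as @ [w]))"
    using qrel_Node_child[OF w(2), where m=k and xs=as and ys="[]"] wf vs by auto
  moreover have "normal_form (Node k (as @ [w]))"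
    using \<open>as \<noteq> []\<close> as w(1) by simp
  ultimately show ?case using vs by (blast intro: qrel.trans)
qed

lemma normalize: "wf_tree t \<Longrightarrow> \<exists>u. normal_form u \<and> qrel t u"
proof (induction t)
  case Leaf
  then show ?case by (intro exI[of _ Leaf]) (auto intro: qrel.refl)
next
  case (Node m ts)
  then obtain f where f: "\<forall>t\<in>set ts. normal_form (f t) \<and> qrel t (f t)"
    by atomize_elim (auto intro: bchoice)
  then have children: "qrel (Node m ts) (Node m (map f ts))"
    using qrel_Node_children[of ts f m "[]"] Node.prems by simp
  then have "wf_tree (Node m (map f ts))"
    using qrel_wf_ar by blast
  moreover obtain u rest where "map f ts = u # rest"
    using Node.prems by (cases ts) auto
  moreover have "\<forall>v\<in>set (map f ts). normal_form v" using f by auto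
  ultimately obtain v where "normal_form v" "qrel (Node m (map f ts)) v"
    using normalize_Node_first_child[of u rest m] by auto
  then show ?case using children by (blast intro: qrel.trans)
qed

section \<open>Injectivity on normal forms\<close>

lemma child_blocks_Cons_below:
  assumes "wf_tree u" "\<forall>t\<in>set us. wf_tree t"
  shows "{C \<in> child_blocks (u # us). \<forall>x\<in>C. x < ar u} = phi u"
proof -
  have "\<not> (\<forall>x\<in>C. x < ar u)" if "C \<in> shift_blocks (ar u) (child_blocks us)" for C
    using that child_blocks_nonempty[OF assms(2)] by (fastforce simp: shift_blocks_def)
  then show ?thesis using phi_block_bounds[OF assms(1)] by auto
qed

lemma child_blocks_Cons_above:
  assumes "wf_tree u" "\<forall>t\<in>set us. wf_tree t"
  shows "{C \<in> child_blocks (u # us). \<forall>x\<in>C. ar u < x} = shift_blocks (ar u) (child_blocks us)"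
proof -
  have "\<not> (\<forall>x\<in>C. ar u < x)" if "C \<in> phi u" for C
    using that phi_nonempty[OF assms(1)] phi_block_bounds[OF assms(1)] by (metis ex_in_conv not_less_iff_gr_or_eq)
  moreover have "\<forall>x\<in>C. ar u < x" if "C \<in> shift_blocks (ar u) (child_blocks us)" for C
    using that child_blocks_bounds_wf[OF assms(2)] by (fastforce simp: shift_blocks_def)
  ultimately show ?thesis by auto
qed

lemma ar_hd_least:
  assumes "\<forall>t\<in>set (u # us). wf_tree t"
  shows "ar u \<in> insert (ar_list (u # us)) (root_block (u # us))"
    and "\<forall>x\<in>insert (ar_list (u # us)) (root_block (u # us)). ar u \<le> x"
  using assms by (cases us; auto simp: root_block_Cons)+

lemma children_eq_if_blocks_eq:
  assumes "\<forall>t\<in>set ts. wf_tree t" "\<forall>t\<in>set ts'. wf_tree t"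
    and inj: "\<And>t t'. t \<in> set ts \<Longrightarrow> t' \<in> set ts' \<Longrightarrow> ar t = ar t' \<Longrightarrow> phi t = phi t' \<Longrightarrow> t = t'"
    and "ar_list ts = ar_list ts'" "root_block ts = root_block ts'" "child_blocks ts = child_blocks ts'"
  shows "ts = ts'"
  using assms
proof (induction ts arbitrary: ts')
  case Nil
  then show ?case using ar_list_eq_0_iff[of ts'] by simp
next
  case (Cons u us)
  obtain u' us' where ts': "ts' = u' # us'"
    using Cons.prems(1,4) ar_ge_1[of u] by (cases ts') auto
  have wf: "wf_tree u" "\<forall>t\<in>set us. wf_tree t" "wf_tree u'" "\<forall>t\<in>set us'. wf_tree t"
    using Cons.prems(1,2) ts' by auto
  have "ar u = ar u'"
    using ar_hd_least[of u us] ar_hd_least[of u' us'] Cons.prems(1,2,4,5) ts'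
    by (metis order_antisym)
  have blocks: "child_blocks (u # us) = child_blocks (u' # us')" using Cons.prems(6) ts' by simp
  have "phi u = {C \<in> child_blocks (u # us). \<forall>x\<in>C. x < ar u}"
    by (fact child_blocks_Cons_below[OF wf(1,2), symmetric])
  also have "\<dots> = phi u'"
    unfolding blocks unfolding \<open>ar u = ar u'\<close> by (rule child_blocks_Cons_below[OF wf(3,4)])
  finally have "u = u'" using Cons.prems(3) ts' \<open>ar u = ar u'\<close> by simp
  have "shift_blocks (ar u) (child_blocks us) = {C \<in> child_blocks (u # us). \<forall>x\<in>C. ar u < x}"
    by (fact child_blocks_Cons_above[OF wf(1,2), symmetric])
  also have "\<dots> = shift_blocks (ar u) (child_blocks us')"
    unfolding blocks unfolding \<open>u = u'\<close> by (rule child_blocks_Cons_above[OF wf(3,4)])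
  finally have "child_blocks us = child_blocks us'" by (simp add: shift_blocks_inject)
  moreover have "ar_list us = ar_list us'" using Cons.prems(4) ts' \<open>u = u'\<close> by simp
  moreover have "root_block us = root_block us'"
  proof (cases "us = []")
    case True
    then have "us' = []" using \<open>ar_list us = ar_list us'\<close> wf(4) ar_list_eq_0_iff by simp
    then show ?thesis using True by simp
  next
    case False
    then have "us' \<noteq> []" using \<open>ar_list us = ar_list us'\<close> wf ar_list_eq_0_iff by metis
    have "\<forall>x\<in>root_block us. 1 \<le> x" "\<forall>x\<in>root_block us'. 1 \<le> x"
      using root_block_subset wf ar_ge_1 by fastforce+
    then have "ar u \<notin> (\<lambda>x. x + ar u) ` root_block us" "ar u \<notin> (\<lambda>x. x + ar u) ` root_block us'"
      by auto
    moreover have "insert (ar u) ((\<lambda>x. x + ar u) ` root_block us)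
        = insert (ar u) ((\<lambda>x. x + ar u) ` root_block us')"
      using Cons.prems(5) ts' \<open>u = u'\<close> False \<open>us' \<noteq> []\<close> by (simp add: root_block_Cons)
    ultimately have "(\<lambda>x. x + ar u) ` root_block us = (\<lambda>x. x + ar u) ` root_block us'"
      by (simp add: insert_ident)
    then show ?thesis by (simp add: inj_image_eq_iff)
  qed
  ultimately have "us = us'"
    using Cons.IH wf Cons.prems(3) ts' by simp
  then show ?case using ts' \<open>u = u'\<close> by simp
qed

lemma normal_form_root_block:
  assumes "wf_tree (Node m ts)" "normal_form (Node m ts)"
  shows "1 \<in> root_block ts" "child_blocks ts = phi (Node m ts) - {root_block ts}"
proof -
  obtain us where ts: "ts = Leaf # us" "us \<noteq> []"
    using assms by (cases ts) (auto simp: Suc_le_eq)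
  then show "1 \<in> root_block ts" by (simp add: root_block_Cons)
  moreover have "partition_on ({1..<ar_list ts} - root_block ts) (child_blocks ts)"
    using assms(1) phi_NCP by (intro partition_child_blocks) auto
  ultimately have "root_block ts \<notin> child_blocks ts"
    using partition_onD1 by blast
  then show "child_blocks ts = phi (Node m ts) - {root_block ts}"
    using phi_Node[OF assms(1)] by auto
qed

lemma normal_form_block_of_1:
  assumes "wf_tree (Node m ts)" "normal_form (Node m ts)" "B \<in> phi (Node m ts)" "1 \<in> B"
  shows "B = root_block ts"
proof -
  have "partition_on {1..<ar (Node m ts)} (phi (Node m ts))"
    using phi_NCP[OF assms(1)] ar_ge_1[OF assms(1)] NCP_iff by blast
  moreover have "root_block ts \<in> phi (Node m ts)" using phi_Node[OF assms(1)] by simp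
  ultimately show ?thesis
    using assms(3,4) normal_form_root_block(1)[OF assms(1,2)] disjointD partition_onD2 by blast
qed

lemma normal_form_phi_inj:
  "wf_tree t \<Longrightarrow> normal_form t \<Longrightarrow> wf_tree t' \<Longrightarrow> normal_form t' \<Longrightarrow> ar t = ar t' \<Longrightarrow>
    phi t = phi t' \<Longrightarrow> t = t'"
proof (induction t arbitrary: t')
  case Leaf
  then show ?case using ar_Node_ge_2 by (cases t') fastforce+
next
  case (Node m ts)
  obtain m' ts' where t': "t' = Node m' ts'"
    using Node.prems ar_Node_ge_2[of m ts] by (cases t') auto
  have wf': "wf_tree (Node m' ts')" "normal_form (Node m' ts')" using Node.prems t' by auto
  have "root_block ts' \<in> phi (Node m ts)"
    using phi_Node[OF wf'(1)] Node.prems(6) t' by simp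
  then have root: "root_block ts' = root_block ts"
    using normal_form_block_of_1[OF Node.prems(1,2)] normal_form_root_block(1)[OF wf'] by blast
  moreover have "child_blocks ts = child_blocks ts'"
    using Node.prems t' normal_form_root_block(2) root by metis
  moreover have "ar_list ts = ar_list ts'" using Node.prems t' by simp
  ultimately have "ts = ts'"
    using Node t' by (intro children_eq_if_blocks_eq) auto
  then show ?case using Node.prems t' by simp
qed

theorem qrel_complete:
  assumes "wf_tree t" "wf_tree t'" "ar t = ar t'" "phi t = phi t'"
  shows "qrel t t'"
proof -
  obtain u u' where u: "normal_form u" "qrel t u" and u': "normal_form u'" "qrel t' u'"
    using normalize assms(1,2) by blast
  then have "u = u'"
    using assms qrel_wf_ar phi_qrel by (intro normal_form_phi_inj) auto
  then show ?thesis using u(2) u'(2) by (blast intro: qrel.trans qrel.sym)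
qed

theorem mainTheorem1:
  shows "(\<forall>n\<ge>2. phi (qgen n) = pgen n)
    \<and> (\<forall>t. wf_tree t \<longrightarrow> phi t \<in> NCP (ar t))
    \<and> (\<forall>t s i. wf_tree t \<and> wf_tree s \<and> 1 \<le> i \<and> i \<le> ar t \<longrightarrow>
          phi (graft t i s) = ncp_comp (phi t) i (ar s) (phi s))
    \<and> (\<forall>t t'. qrel t t' \<longrightarrow> phi t = phi t')
    \<and> (\<forall>n. \<forall>P\<in>NCP n. \<exists>t. wf_tree t \<and> ar t = n \<and> phi t = P)
    \<and> (\<forall>t t'. wf_tree t \<and> wf_tree t' \<and> ar t = ar t' \<and> phi t = phi t' \<longrightarrow> qrel t t')"
proof (intro conjI)
  show "\<forall>n\<ge>2. phi (qgen n) = pgen n" using phi_qgen by blast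
  show "\<forall>t. wf_tree t \<longrightarrow> phi t \<in> NCP (ar t)" using phi_NCP by blast
  show "\<forall>t s i. wf_tree t \<and> wf_tree s \<and> 1 \<le> i \<and> i \<le> ar t \<longrightarrow>
      phi (graft t i s) = ncp_comp (phi t) i (ar s) (phi s)"
    using phi_graft by blast
  show "\<forall>t t'. qrel t t' \<longrightarrow> phi t = phi t'" using phi_qrel by blast
  show "\<forall>n. \<forall>P\<in>NCP n. \<exists>t. wf_tree t \<and> ar t = n \<and> phi t = P" using phi_surj by blast
  show "\<forall>t t'. wf_tree t \<and> wf_tree t' \<and> ar t = ar t' \<and> phi t = phi t' \<longrightarrow> qrel t t'"
    using qrel_complete by blast
qed

end
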